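(* For any positive integers $m$ and $s_1,\ldots,s_m$ there is a constant $c=c(s_1,\ldots,s_m)$ such that the following holds: if $n=p_1^{s_1}\cdots p_m^{s_m}$ with primes $p_1<p_2<\cdots<p_m$ and $p_1>c$, then the $n\times n$ square has no perfect Mondrian partition.
   Context: A Mondrian partition of an $n\times n$ square ($n$ a positive integer) is a dissection of the square into $k\ge 2$ non-overlapping rectangles with positive integer side lengths which are pairwise non-congruent (rectangles of dimensions $a\times b$ and $b\times a$ count as congruent). It is perfect if all its rectangles have the same area (i.e., its defect, the difference between the largest and smallest areas, is $0$). *)

theory Defs
  imports "HOL-Analysis.Analysis"
begin

text \<open>A rectangle is given by its lower-left corner (x, y) (real coordinates)
  and its positive integer width w and height h: (x, y, w, h).\<close>

type_synonym rect = "real \<times> real \<times> nat \<times> nat"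

definition rect_set :: "rect \<Rightarrow> (real \<times> real) set" where
  "rect_set r = (case r of (x, y, w, h) \<Rightarrow> {x..x + real w} \<times> {y..y + real h})"

definition rect_interior :: "rect \<Rightarrow> (real \<times> real) set" where
  "rect_interior r = (case r of (x, y, w, h) \<Rightarrow> {x<..<x + real w} \<times> {y<..<y + real h})"

definition rect_w :: "rect \<Rightarrow> nat" where "rect_w r = fst (snd (snd r))"
definition rect_h :: "rect \<Rightarrow> nat" where "rect_h r = snd (snd (snd r))"
definition rect_area :: "rect \<Rightarrow> nat" where "rect_area r = rect_w r * rect_h r"

definition congruent_rects :: "rect \<Rightarrow> rect \<Rightarrow> bool" where
  "congruent_rects r1 r2 \<longleftrightarrow>
     (rect_w r1 = rect_w r2 \<and> rect_h r1 = rect_h r2) \<or>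
     (rect_w r1 = rect_h r2 \<and> rect_h r1 = rect_w r2)"

definition mondrian_partition :: "nat \<Rightarrow> rect set \<Rightarrow> bool" where
  "mondrian_partition n R \<longleftrightarrow>
     finite R \<and> card R \<ge> 2 \<and>
     (\<forall>r\<in>R. rect_w r > 0 \<and> rect_h r > 0) \<and>
     (\<Union>r\<in>R. rect_set r) = {0..real n} \<times> {0..real n} \<and>
     (\<forall>r1\<in>R. \<forall>r2\<in>R. r1 \<noteq> r2 \<longrightarrow> rect_interior r1 \<inter> rect_interior r2 = {}) \<and>
     (\<forall>r1\<in>R. \<forall>r2\<in>R. r1 \<noteq> r2 \<longrightarrow> \<not> congruent_rects r1 r2)"

definition perfect_mondrian_partition :: "nat \<Rightarrow> rect set \<Rightarrow> bool" where
  "perfect_mondrian_partition n R \<longleftrightarrow>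
     mondrian_partition n R \<and> (\<forall>r1\<in>R. \<forall>r2\<in>R. rect_area r1 = rect_area r2)"

end

theory Submission
  imports Defs "HOL-Computational_Algebra.Primes"
begin

text \<open>Comparing areas, the k rectangles of a perfect Mondrian partition of the n x n square
  all have area n^2 / k. Equal areas and non-congruence force distinct widths, and every
  width divides n^2, so k is at most the number of divisors of n^2, which for
  n = p_1^s_1 ... p_m^s_m is bounded by c = (2 s_1 + 1) ... (2 s_m + 1) independently of
  the primes. On the other hand k divides n^2, so some p_i divides k and k \<ge> p_1 > c.\<close>

lemma rect_set_eq_cbox: "rect_set (x, y, w, h) = cbox (x, y) (x + real w, y + real h)"
  by (simp add: rect_set_def cbox_Pair_eq)

lemma rect_interior_eq_box: "rect_interior (x, y, w, h) = box (x, y) (x + real w, y + real h)"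
  by (auto simp: rect_interior_def box_def Basis_prod_def inner_prod_def)

lemma rect_set_fmeasurable: "rect_set r \<in> fmeasurable lborel"
  by (cases r) (simp add: rect_set_eq_cbox)

lemma rect_interior_fmeasurable: "rect_interior r \<in> fmeasurable lborel"
  by (cases r) (simp add: rect_interior_eq_box)

lemma measure_rect_set: "measure lborel (rect_set r) = real (rect_area r)"
  by (cases r) (simp add: rect_set_eq_cbox rect_area_def rect_w_def rect_h_def content_Pair)

lemma measure_rect_interior: "measure lborel (rect_interior r) = real (rect_area r)"
  by (cases r)
    (simp add: rect_interior_eq_box rect_area_def rect_w_def rect_h_def
      measure_lborel_box_eq Basis_prod_def)

lemma rect_interior_subset: "rect_interior r \<subseteq> rect_set r"
  by (cases r) (auto simp: rect_interior_def rect_set_def)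

text \<open>The rectangles cover the square, giving \<open>\<ge>\<close>, and their interiors are disjoint
  subsets of it, giving \<open>\<le>\<close>.\<close>

lemma mondrian_partition_sum_area:
  assumes "mondrian_partition n R"
  shows "(\<Sum>r\<in>R. rect_area r) = n ^ 2"
proof -
  have fin: "finite R"
    and cover: "(\<Union>r\<in>R. rect_set r) = cbox (0, 0) (real n, real n)"
    and disj: "pairwise (\<lambda>r1 r2. disjnt (rect_interior r1) (rect_interior r2)) R"
    using assms by (auto simp: mondrian_partition_def cbox_Pair_eq pairwise_def disjnt_def)
  have square: "measure lborel (cbox (0::real, 0::real) (real n, real n)) = real n ^ 2"
    by (simp add: content_Pair power2_eq_square)
  have "measure lborel (\<Union>r\<in>R. rect_set r) \<le> (\<Sum>r\<in>R. measure lborel (rect_set r))"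
    by (rule measure_UNION_le[OF fin]) (rule fmeasurableD[OF rect_set_fmeasurable])
  then have "real n ^ 2 \<le> real (\<Sum>r\<in>R. rect_area r)"
    unfolding cover square measure_rect_set by simp
  moreover have "measure lborel (\<Union>r\<in>R. rect_interior r) = real (\<Sum>r\<in>R. rect_area r)"
  proof -
    have "measure lborel (\<Union>r\<in>R. rect_interior r) = (\<Sum>r\<in>R. measure lborel (rect_interior r))"
      by (rule measure_UNION'[OF fin rect_interior_fmeasurable disj])
    then show ?thesis
      unfolding measure_rect_interior by simp
  qed
  moreover have "measure lborel (\<Union>r\<in>R. rect_interior r) \<le> real n ^ 2"
    unfolding square[symmetric]
  proof (rule measure_mono_fmeasurable)
    show "(\<Union>r\<in>R. rect_interior r) \<subseteq> cbox (0, 0) (real n, real n)"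
      using rect_interior_subset cover by blast
    show "(\<Union>r\<in>R. rect_interior r) \<in> sets lborel"
      using fin by (intro sets.finite_UN) (use rect_interior_fmeasurable fmeasurableD in blast)+
  qed simp
  ultimately have "real (\<Sum>r\<in>R. rect_area r) = real n ^ 2"
    by linarith
  then show ?thesis
    by (metis of_nat_eq_iff of_nat_power)
qed

lemma perfect_mondrian_partitionD:
  assumes "perfect_mondrian_partition n R"
  shows "mondrian_partition n R" and "card R \<ge> 2"
    and "\<And>r. r \<in> R \<Longrightarrow> rect_w r > 0"
    and "\<And>r1 r2. r1 \<in> R \<Longrightarrow> r2 \<in> R \<Longrightarrow> r1 \<noteq> r2 \<Longrightarrow> \<not> congruent_rects r1 r2"
    and "\<And>r1 r2. r1 \<in> R \<Longrightarrow> r2 \<in> R \<Longrightarrow> rect_area r1 = rect_area r2"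
proof -
  show M: "mondrian_partition n R"
    using assms unfolding perfect_mondrian_partition_def by (elim conjE)
  show "\<And>r1 r2. r1 \<in> R \<Longrightarrow> r2 \<in> R \<Longrightarrow> rect_area r1 = rect_area r2"
    using assms unfolding perfect_mondrian_partition_def by (elim conjE) blast
  have "card R \<ge> 2" and "\<forall>r\<in>R. rect_w r > 0 \<and> rect_h r > 0"
    and "\<forall>r1\<in>R. \<forall>r2\<in>R. r1 \<noteq> r2 \<longrightarrow> \<not> congruent_rects r1 r2"
    by (insert M[unfolded mondrian_partition_def], elim conjE, assumption)+
  then show "card R \<ge> 2" and "\<And>r. r \<in> R \<Longrightarrow> rect_w r > 0"
    and "\<And>r1 r2. r1 \<in> R \<Longrightarrow> r2 \<in> R \<Longrightarrow> r1 \<noteq> r2 \<Longrightarrow> \<not> congruent_rects r1 r2"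
    by blast+
qed

lemma perfect_mondrian_card_mult_area:
  assumes "perfect_mondrian_partition n R" and "r \<in> R"
  shows "card R * rect_area r = n ^ 2"
proof -
  have "(\<Sum>r'\<in>R. rect_area r') = (\<Sum>r'\<in>R. rect_area r)"
    using perfect_mondrian_partitionD(5)[OF assms(1) _ assms(2)] by (rule sum.cong[OF refl])
  then show ?thesis
    using mondrian_partition_sum_area[OF perfect_mondrian_partitionD(1)[OF assms(1)]] by simp
qed

lemma perfect_mondrian_inj_on_width:
  assumes "perfect_mondrian_partition n R"
  shows "inj_on rect_w R"
proof (rule inj_onI)
  fix r1 r2
  assume r: "r1 \<in> R" "r2 \<in> R" and w: "rect_w r1 = rect_w r2"
  have "rect_w r1 * rect_h r1 = rect_w r2 * rect_h r2"
    using perfect_mondrian_partitionD(5)[OF assms r] by (simp add: rect_area_def)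
  with w perfect_mondrian_partitionD(3)[OF assms r(1)] have "congruent_rects r1 r2"
    by (simp add: congruent_rects_def)
  then show "r1 = r2"
    using perfect_mondrian_partitionD(4)[OF assms r] by blast
qed

lemma perfect_mondrian_card_le_divisors:
  assumes "perfect_mondrian_partition n R" and "n > 0"
  shows "card R \<le> card {d. d dvd n ^ 2}"
proof -
  have "rect_w ` R \<subseteq> {d. d dvd n ^ 2}"
  proof
    fix d assume "d \<in> rect_w ` R"
    then obtain r where r: "r \<in> R" "d = rect_w r" by blast
    have "d dvd rect_area r"
      using r by (simp add: rect_area_def)
    also have "rect_area r dvd n ^ 2"
      using perfect_mondrian_card_mult_area[OF assms(1) r(1)] by (metis dvd_triv_right)
    finally show "d \<in> {d. d dvd n ^ 2}" by simp
  qed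
  then have "card (rect_w ` R) \<le> card {d. d dvd n ^ 2}"
    using assms(2) by (intro card_mono) (auto intro: finite_divisors_nat)
  then show ?thesis
    using card_image[OF perfect_mondrian_inj_on_width[OF assms(1)]] by simp
qed

lemma perfect_mondrian_prime_factor_le_card:
  assumes "perfect_mondrian_partition n R"
  obtains q where "prime q" "q dvd n" "q \<le> card R"
proof -
  have "card R \<ge> 2"
    using perfect_mondrian_partitionD(2)[OF assms] .
  then obtain q where q: "prime q" "q dvd card R"
    using prime_factor_nat[of "card R"] by auto
  obtain r where "r \<in> R"
    using \<open>card R \<ge> 2\<close> by (metis all_not_in_conv card.empty not_numeral_le_zero)
  then have "q dvd n ^ 2"
    using q(2) perfect_mondrian_card_mult_area[OF assms] dvd_mult2 by metis
  then have "q dvd n"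
    using q(1) prime_dvd_power by blast
  moreover have "q \<le> card R"
    using q(2) \<open>card R \<ge> 2\<close> by (intro dvd_imp_le) auto
  ultimately show ?thesis
    using q(1) that by blast
qed

lemma card_divisors_mult_le:
  fixes a b :: nat
  assumes "a > 0" "b > 0"
  shows "card {d. d dvd a * b} \<le> card {d. d dvd a} * card {d. d dvd b}"
proof -
  let ?D = "{d. d dvd a} \<times> {d. d dvd b}"
  have fin: "finite ?D"
    using assms by (auto intro: finite_divisors_nat)
  have "{d. d dvd a * b} \<subseteq> (\<lambda>(u, v). u * v) ` ?D"
    by (auto dest!: division_decomp)
  then have "card {d. d dvd a * b} \<le> card ((\<lambda>(u, v). u * v) ` ?D)"
    using fin by (intro card_mono) auto
  also have "\<dots> \<le> card ?D"
    using fin by (rule card_image_le)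
  finally show ?thesis
    by (simp add: card_cartesian_product)
qed

lemma card_divisors_prime_power_le:
  fixes p :: nat
  assumes "prime p"
  shows "card {d. d dvd p ^ e} \<le> e + 1"
proof -
  have "{d. d dvd p ^ e} = (\<lambda>i. p ^ i) ` {..e}"
    using divides_primepow_nat[OF assms] by auto
  then show ?thesis
    using card_image_le[of "{..e}" "\<lambda>i. p ^ i"] by simp
qed

lemma card_divisors_prod_prime_powers_le:
  fixes p e :: "nat \<Rightarrow> nat"
  assumes "\<forall>i<m. prime (p i)"
  shows "card {d. d dvd (\<Prod>i<m. p i ^ e i)} \<le> (\<Prod>i<m. e i + 1)"
  using assms
proof (induction m)
  case 0
  then show ?case by simp
next
  case (Suc m)
  have "(\<Prod>i<m. p i ^ e i) > 0" and "p m ^ e m > 0"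
    using Suc.prems by (auto intro!: prod_pos simp: prime_gt_0_nat)
  then have "card {d. d dvd (\<Prod>i<Suc m. p i ^ e i)}
      \<le> card {d. d dvd (\<Prod>i<m. p i ^ e i)} * card {d. d dvd p m ^ e m}"
    using card_divisors_mult_le by simp
  also have "\<dots> \<le> (\<Prod>i<m. e i + 1) * (e m + 1)"
    using Suc card_divisors_prime_power_le[of "p m" "e m"] by (intro mult_mono) auto
  finally show ?case by simp
qed

lemma prime_dvd_prod_prime_powers:
  fixes p e :: "nat \<Rightarrow> nat"
  assumes "\<forall>i<m. prime (p i)" and "prime q" and "q dvd (\<Prod>i<m. p i ^ e i)"
  shows "\<exists>i<m. q = p i"
proof -
  obtain i where "i < m" "q dvd p i ^ e i"
    using assms(2,3) by (auto simp: prime_dvd_prod_iff)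
  then show ?thesis
    using assms(1,2) prime_dvd_power primes_dvd_imp_eq by blast
qed

theorem mainTheorem6:
  fixes m :: nat and s :: "nat \<Rightarrow> nat"
  assumes "m \<ge> 1" and "\<forall>i<m. s i > 0"
  shows "\<exists>c::nat. \<forall>(p :: nat \<Rightarrow> nat) (n :: nat).
           (\<forall>i<m. prime (p i)) \<and> (\<forall>i j. i < j \<and> j < m \<longrightarrow> p i < p j) \<and>
           p 0 > c \<and> n = (\<Prod>i<m. p i ^ s i)
           \<longrightarrow> \<not> (\<exists>R. perfect_mondrian_partition n R)"
proof (intro exI[of _ "\<Prod>i<m. 2 * s i + 1"] allI impI notI, elim conjE exE)
  fix p :: "nat \<Rightarrow> nat" and n R
  assume primes: "\<forall>i<m. prime (p i)" and sorted: "\<forall>i j. i < j \<and> j < m \<longrightarrow> p i < p j"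
    and large: "p 0 > (\<Prod>i<m. 2 * s i + 1)" and n: "n = (\<Prod>i<m. p i ^ s i)"
    and R: "perfect_mondrian_partition n R"
  have n2: "n ^ 2 = (\<Prod>i<m. p i ^ (2 * s i))"
    unfolding n by (simp add: prod_power_distrib power_mult[symmetric] mult.commute)
  have "n > 0"
    using primes unfolding n by (auto intro!: prod_pos simp: prime_gt_0_nat)
  have "card R \<le> card {d. d dvd n ^ 2}"
    using perfect_mondrian_card_le_divisors[OF R \<open>n > 0\<close>] .
  also have "\<dots> \<le> (\<Prod>i<m. 2 * s i + 1)"
    unfolding n2 using card_divisors_prod_prime_powers_le[OF primes, of "\<lambda>i. 2 * s i"] by simp
  finally have "card R < p 0"
    using large by linarith
  obtain q where "prime q" "q dvd n" "q \<le> card R"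
    using perfect_mondrian_prime_factor_le_card[OF R] .
  then obtain i where "i < m" "q = p i"
    using prime_dvd_prod_prime_powers[OF primes, of q s] n by auto
  then have "p 0 \<le> q"
    using sorted by (cases "i = 0") (auto intro: less_imp_le)
  with \<open>q \<le> card R\<close> \<open>card R < p 0\<close> show False
    by linarith
qed

end
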